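(* Let $f(v)=\frac12|v-1|$ (Total Variation), so $f^*(u)=u$ with $\mathrm{dom}(f^* )=[-\frac12,\frac12]$. In the binary noisy-label setting described in the context, $\mathrm{Bias}_f(h,g)$ is constant (in $h$ and $g$), and for any hypothesis space $\mathcal H$, $D_f(P_{h\times Y}\|Q_{h\times Y})$ is $\mathcal H$-robust with label noise.
   Context: $(X,Y)$ with $X\in\mathcal X$, $Y\in\{-1,+1\}$; noisy label $\tilde Y$ generated from $Y$, conditionally independently of $X$ given $Y$, with $e_+={\mathbb P}(\tilde Y=-1\mid Y=+1)$, $e_-={\mathbb P}(\tilde Y=+1\mid Y=-1)$, $e_++e_-<1$. A hypothesis space $\mathcal H$ is a set of classifiers $h:\mathcal X\to\{-1,+1\}$. $P_{h\times Y}(y,y')={\mathbb P}(h(X)=y,Y=y')$, $Q_{h\times Y}(y,y')={\mathbb P}(h(X)=y){\mathbb P}(Y=y')$, and $\tilde P_{h\times\tilde Y},\tilde Q_{h\times\tilde Y}$ the same with $\tilde Y$. $D_f(P\|Q)=\sum_z q(z)f(p(z)/q(z))$. For $g:\{-1,+1\}^2\to\mathrm{dom}(f^* )$, $\Delta^y_f(h,g)=\mathbb E_X[g(h(X),y)]-\mathbb E_X[f^*(g(h(X),y))]$ and $\mathrm{Bias}_f(h,g)=e_+\Delta^{-1}_f(h,g)+e_-\Delta^{+1}_f(h,g)$. With $h^*_f\in\arg\max_{h\in\mathcal H}D_f(P_{h\times Y}\|Q_{h\times Y})$, $D_f$ is $\mathcal H$-robust if $h^*_f=\arg\max_{h\in\mathcal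 H}D_f(\tilde P_{h\times\tilde Y}\|\tilde Q_{h\times\tilde Y})$. *)

theory Defs
  imports "HOL-Probability.Probability"
begin

definition labels :: "int set" where
  "labels = {-1, 1}"

definition fdiv :: "(real \<Rightarrow> real) \<Rightarrow> (int \<times> int \<Rightarrow> real) \<Rightarrow> (int \<times> int \<Rightarrow> real) \<Rightarrow> real" where
  "fdiv f p q = (\<Sum>z\<in>labels \<times> labels. q z * f (p z / q z))"

definition conj_fun :: "(real \<Rightarrow> real) \<Rightarrow> real \<Rightarrow> real" where
  "conj_fun f u = (SUP v. u * v - f v)"

definition f_TV :: "real \<Rightarrow> real" where
  "f_TV v = \<bar>v - 1\<bar> / 2"

definition Pjoint :: "'w measure \<Rightarrow> ('w \<Rightarrow> 'x) \<Rightarrow> ('w \<Rightarrow> int) \<Rightarrow> ('x \<Rightarrow> int) \<Rightarrow> int \<times> int \<Rightarrow> real" where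
  "Pjoint M X Y h z = measure M {w \<in> space M. h (X w) = fst z \<and> Y w = snd z}"

definition Qprod :: "'w measure \<Rightarrow> ('w \<Rightarrow> 'x) \<Rightarrow> ('w \<Rightarrow> int) \<Rightarrow> ('x \<Rightarrow> int) \<Rightarrow> int \<times> int \<Rightarrow> real" where
  "Qprod M X Y h z = measure M {w \<in> space M. h (X w) = fst z} * measure M {w \<in> space M. Y w = snd z}"

definition cond_label :: "'w measure \<Rightarrow> ('w \<Rightarrow> int) \<Rightarrow> ('w \<Rightarrow> int) \<Rightarrow> int \<Rightarrow> int \<Rightarrow> real" where
  "cond_label M Y Yt a b = measure M {w \<in> space M. Yt w = a \<and> Y w = b} / measure M {w \<in> space M. Y w = b}"

definition e_plus where "e_plus M Y Yt = cond_label M Y Yt (-1) 1"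
definition e_minus where "e_minus M Y Yt = cond_label M Y Yt 1 (-1)"

definition Delta_f :: "(real \<Rightarrow> real) \<Rightarrow> 'w measure \<Rightarrow> ('w \<Rightarrow> 'x) \<Rightarrow> int \<Rightarrow> ('x \<Rightarrow> int) \<Rightarrow> (int \<Rightarrow> int \<Rightarrow> real) \<Rightarrow> real" where
  "Delta_f f M X y h g =
     (\<integral>w. g (h (X w)) y \<partial>M) - (\<integral>w. conj_fun f (g (h (X w)) y) \<partial>M)"

definition Bias_f where
  "Bias_f f M X Y Yt h g =
     e_plus M Y Yt * Delta_f f M X (-1) h g + e_minus M Y Yt * Delta_f f M X 1 h g"

definition argmax_on :: "('a \<Rightarrow> real) \<Rightarrow> 'a set \<Rightarrow> 'a set" where
  "argmax_on F H = {h \<in> H. \<forall>h'\<in>H. F h' \<le> F h}"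

definition H_robust where
  "H_robust f M X Y Yt H \<longleftrightarrow>
     argmax_on (\<lambda>h. fdiv f (Pjoint M X Y h) (Qprod M X Y h)) H =
     argmax_on (\<lambda>h. fdiv f (Pjoint M X Yt h) (Qprod M X Yt h)) H"

definition classifier :: "'x measure \<Rightarrow> ('x \<Rightarrow> int) \<Rightarrow> bool" where
  "classifier N h \<longleftrightarrow> h \<in> measurable N (count_space UNIV) \<and> (\<forall>x\<in>space N. h x \<in> labels)"

end

theory Submission
  imports Defs
begin

text \<open>
  For f(v) = |v - 1|/2 the convex conjugate is the identity on [-1/2, 1/2], so both
  Delta terms vanish and the bias is 0.
  For the binary output U = h(X) and a binary label V, the four entries of P - Q are
  +c or -c with c = P(U=1, V=1) - P(U=1) P(V=1) (the covariance of the indicators),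
  hence the total variation divergence equals 2|c|.
  Because the noise is independent of X given Y,
  P(U=1, noisy label=1) = (1 - e+) P(U=1, Y=1) + e- P(U=1, Y=-1), and likewise without
  the event U = 1; a short computation turns this into c_noisy = (1 - e+ - e-) c.
  So the noisy divergence is a fixed positive multiple of the clean one and has the
  same maximisers.
\<close>

lemma f_TV_perspective:
  fixes p q :: real
  assumes "0 \<le> q" and "q = 0 \<Longrightarrow> p = 0"
  shows "q * f_TV (p / q) = \<bar>p - q\<bar> / 2"
proof (cases "q = 0")
  case True
  then show ?thesis using assms by (simp add: f_TV_def)
next
  case False
  have "q * \<bar>p / q - 1\<bar> = \<bar>q * (p / q - 1)\<bar>"
    using assms by (simp add: abs_mult)
  also have "\<dots> = \<bar>p - q\<bar>"
    using False by (simp add: right_diff_distrib)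
  finally show ?thesis by (simp add: f_TV_def)
qed

lemma fdiv_f_TV:
  assumes "\<And>z. 0 \<le> q z" and "\<And>z. q z = 0 \<Longrightarrow> p z = 0"
  shows "fdiv f_TV p q = (\<Sum>z\<in>labels \<times> labels. \<bar>p z - q z\<bar>) / 2"
  using assms by (simp add: fdiv_def f_TV_perspective sum_divide_distrib)

lemma conj_fun_f_TV:
  assumes "u \<in> {-1/2..1/2}"
  shows "conj_fun f_TV u = u"
proof -
  have le: "u * v - f_TV v \<le> u" for v
  proof -
    have "u * (v - 1) \<le> \<bar>u\<bar> * \<bar>v - 1\<bar>" by (metis abs_ge_self abs_mult)
    also have "\<dots> \<le> 1/2 * \<bar>v - 1\<bar>" using assms by (intro mult_right_mono) auto
    finally show ?thesis by (simp add: f_TV_def algebra_simps)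
  qed
  have "(SUP v. u * v - f_TV v) = u"
  proof (rule antisym)
    show "(SUP v. u * v - f_TV v) \<le> u" by (rule cSUP_least) (auto intro: le)
    have "bdd_above (range (\<lambda>v. u * v - f_TV v))" by (rule bdd_aboveI[where M=u]) (auto intro: le)
    then have "u * 1 - f_TV 1 \<le> (SUP v. u * v - f_TV v)" by (rule cSUP_upper[rotated]) auto
    then show "u \<le> (SUP v. u * v - f_TV v)" by (simp add: f_TV_def)
  qed
  then show ?thesis by (simp add: conj_fun_def)
qed

lemma Delta_f_TV_eq_0:
  assumes "\<forall>w\<in>space M. g (h (X w)) y \<in> {-1/2..1/2}"
  shows "Delta_f f_TV M X y h g = 0"
  using assms by (simp add: Delta_f_def conj_fun_f_TV cong: Bochner_Integration.integral_cong)

lemma Bias_f_TV_eq_0: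
  assumes "X \<in> M \<rightarrow>\<^sub>M N" and "classifier N h"
    and "\<forall>a\<in>labels. \<forall>b\<in>labels. g a b \<in> {-1/2..1/2}"
  shows "Bias_f f_TV M X Y Yt h g = 0"
proof -
  have "h (X w) \<in> labels" if "w \<in> space M" for w
    using assms(2) measurable_space[OF assms(1) that] by (simp add: classifier_def)
  then have "Delta_f f_TV M X y h g = 0" if "y \<in> labels" for y
    using assms(3) that by (intro Delta_f_TV_eq_0) blast
  then show ?thesis
    by (simp add: Bias_f_def labels_def)
qed

definition label_cov :: "'w measure \<Rightarrow> ('w \<Rightarrow> int) \<Rightarrow> ('w \<Rightarrow> int) \<Rightarrow> real" where
  "label_cov M U V =
     measure M {w \<in> space M. U w = 1 \<and> V w = 1}
     - measure M {w \<in> space M. U w = 1} * measure M {w \<in> space M. V w = 1}"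

lemma (in finite_measure) measure_label_neg:
  assumes "{w \<in> space M. P w} \<in> sets M" and "\<forall>w\<in>space M. V w \<in> labels"
    and [measurable]: "V \<in> M \<rightarrow>\<^sub>M count_space UNIV" and "b \<in> labels"
  shows "measure M {w \<in> space M. P w \<and> V w = -b}
       = measure M {w \<in> space M. P w} - measure M {w \<in> space M. P w \<and> V w = b}"
proof -
  have "{w \<in> space M. P w \<and> V w = -b} = {w \<in> space M. P w} - {w \<in> space M. P w \<and> V w = b}"
    using assms(2,4) by (auto simp: labels_def)
  moreover have "{w \<in> space M. P w \<and> V w = b} \<in> sets M"
    using assms(1) by measurable
  ultimately show ?thesis
    using assms(1) by (simp add: finite_measure_Diff subset_eq)
qed

lemma (in prob_space) prob_label_compl:
  assumes "\<forall>w\<in>space M. V w \<in> labels" and "V \<in> M \<rightarrow>\<^sub>M count_space UNIV" and "b \<in> labels"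
  shows "prob {w \<in> space M. V w = -b} = 1 - prob {w \<in> space M. V w = b}"
  using measure_label_neg[of "\<lambda>_. True", OF _ assms] by (simp add: prob_space)

lemma (in prob_space) prob_label_pair_deviation:
  assumes [measurable]: "U \<in> M \<rightarrow>\<^sub>M count_space UNIV" "V \<in> M \<rightarrow>\<^sub>M count_space UNIV"
    and U_label: "\<forall>w\<in>space M. U w \<in> labels" and V_label: "\<forall>w\<in>space M. V w \<in> labels"
    and "a \<in> labels" "b \<in> labels"
  shows "prob {w \<in> space M. U w = a \<and> V w = b} - prob {w \<in> space M. U w = a} * prob {w \<in> space M. V w = b}
       = a * b * label_cov M U V"
proof -
  define dev where "dev a b =
    prob {w \<in> space M. U w = a \<and> V w = b} - prob {w \<in> space M. U w = a} * prob {w \<in> space M. V w = b}"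
    for a b
  have neg_snd: "dev a (-b) = - dev a b" if "b \<in> labels" for a b
  proof -
    have V: "prob {w \<in> space M. V w = -b} = 1 - prob {w \<in> space M. V w = b}"
      using prob_label_compl[OF V_label assms(2) that] .
    have UV: "prob {w \<in> space M. U w = a \<and> V w = -b}
        = prob {w \<in> space M. U w = a} - prob {w \<in> space M. U w = a \<and> V w = b}"
      using measure_label_neg[of "\<lambda>w. U w = a", OF _ V_label _ that] by simp
    show ?thesis
      unfolding dev_def V UV by (simp add: algebra_simps)
  qed
  have neg_fst: "dev (-a) b = - dev a b" if "a \<in> labels" for a b
  proof -
    have U: "prob {w \<in> space M. U w = -a} = 1 - prob {w \<in> space M. U w = a}"
      using prob_label_compl[OF U_label assms(1) that] .
    have "{w \<in> space M. V w = b} \<in> events"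
      by measurable
    then have UV: "prob {w \<in> space M. U w = -a \<and> V w = b}
        = prob {w \<in> space M. V w = b} - prob {w \<in> space M. U w = a \<and> V w = b}"
      using measure_label_neg[OF _ U_label assms(1) that] by (simp add: conj_commute)
    show ?thesis
      unfolding dev_def U UV by (simp add: algebra_simps)
  qed
  have "dev a b = a * b * dev 1 1"
    using assms(5,6) neg_fst[of 1] neg_snd[of 1] neg_fst[of 1 "-1"]
    by (auto simp: labels_def)
  then show ?thesis by (simp add: dev_def label_cov_def)
qed

lemma (in prob_space) fdiv_f_TV_labels:
  assumes [measurable]: "U \<in> M \<rightarrow>\<^sub>M count_space UNIV" "V \<in> M \<rightarrow>\<^sub>M count_space UNIV"
    and "\<forall>w\<in>space M. U w \<in> labels" and "\<forall>w\<in>space M. V w \<in> labels"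
  shows "fdiv f_TV (\<lambda>z. prob {w \<in> space M. U w = fst z \<and> V w = snd z})
                   (\<lambda>z. prob {w \<in> space M. U w = fst z} * prob {w \<in> space M. V w = snd z})
       = 2 * \<bar>label_cov M U V\<bar>"
proof -
  have "prob {w \<in> space M. U w = a \<and> V w = b} = 0"
    if "prob {w \<in> space M. U w = a} * prob {w \<in> space M. V w = b} = 0" for a b
  proof -
    have "prob {w \<in> space M. U w = a \<and> V w = b} \<le> prob {w \<in> space M. U w = a}"
      "prob {w \<in> space M. U w = a \<and> V w = b} \<le> prob {w \<in> space M. V w = b}"
      by (auto intro!: finite_measure_mono)
    then show ?thesis
      using that by (auto simp: mult_eq_0_iff intro: antisym)
  qed
  then have "fdiv f_TV (\<lambda>z. prob {w \<in> space M. U w = fst z \<and> V w = snd z})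
                   (\<lambda>z. prob {w \<in> space M. U w = fst z} * prob {w \<in> space M. V w = snd z})
     = (\<Sum>z\<in>labels \<times> labels. \<bar>prob {w \<in> space M. U w = fst z \<and> V w = snd z}
                                  - prob {w \<in> space M. U w = fst z} * prob {w \<in> space M. V w = snd z}\<bar>) / 2"
    by (intro fdiv_f_TV) auto
  also have "\<dots> = (\<Sum>z\<in>labels \<times> labels. \<bar>label_cov M U V\<bar>) / 2"
    using prob_label_pair_deviation[OF assms]
    by (intro arg_cong[where f = "\<lambda>x. x / 2"] sum.cong) (auto simp: abs_mult labels_def)
  also have "\<dots> = 2 * \<bar>label_cov M U V\<bar>"
    by (simp add: labels_def)
  finally show ?thesis .
qed

lemma argmax_on_cmult:
  assumes "0 < k" and "\<forall>h\<in>H. G h = k * F h"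
  shows "argmax_on F H = argmax_on G H"
  using assms by (auto simp: argmax_on_def)

locale label_noise = prob_space M
  for M :: "'w measure" and N :: "'x measure" and X :: "'w \<Rightarrow> 'x" and Y Yt :: "'w \<Rightarrow> int" +
  assumes X_measurable [measurable]: "X \<in> M \<rightarrow>\<^sub>M N"
    and Y_measurable [measurable]: "Y \<in> M \<rightarrow>\<^sub>M count_space UNIV"
    and Y_label: "\<forall>w\<in>space M. Y w \<in> labels"
    and Yt_measurable [measurable]: "Yt \<in> M \<rightarrow>\<^sub>M count_space UNIV"
    and Yt_label: "\<forall>w\<in>space M. Yt w \<in> labels"
    and noise_cond_indep: "\<forall>A\<in>sets N. \<forall>y y'.
        measure M {w \<in> space M. X w \<in> A \<and> Y w = y \<and> Yt w = y'} * measure M {w \<in> space M. Y w = y}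
      = measure M {w \<in> space M. X w \<in> A \<and> Y w = y} * measure M {w \<in> space M. Y w = y \<and> Yt w = y'}"
begin

lemma prob_noise_cond_label:
  assumes "A \<in> sets N"
  shows "prob {w \<in> space M. X w \<in> A \<and> Y w = y \<and> Yt w = y'}
       = prob {w \<in> space M. X w \<in> A \<and> Y w = y} * cond_label M Y Yt y' y"
proof (cases "prob {w \<in> space M. Y w = y} = 0")
  case True
  \<comment> \<open>then \<open>cond_label\<close> is the junk value \<open>x / 0 = 0\<close>, but both probabilities vanish as well\<close>
  have "prob {w \<in> space M. X w \<in> A \<and> Y w = y \<and> Yt w = y'} \<le> prob {w \<in> space M. Y w = y}"
    "prob {w \<in> space M. X w \<in> A \<and> Y w = y} \<le> prob {w \<in> space M. Y w = y}"
    using assms by (auto intro!: finite_measure_mono)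
  then show ?thesis
    using True by (simp add: measure_le_0_iff)
next
  case False
  then show ?thesis
    using noise_cond_indep assms
    by (simp add: cond_label_def conj_commute field_simps)
qed

lemma prob_noisy_label_pos:
  assumes [measurable]: "A \<in> sets N"
  shows "prob {w \<in> space M. X w \<in> A \<and> Yt w = 1}
       = (1 - e_plus M Y Yt) * prob {w \<in> space M. X w \<in> A \<and> Y w = 1}
         + e_minus M Y Yt * prob {w \<in> space M. X w \<in> A \<and> Y w = -1}"
proof -
  have A_Yt: "{w \<in> space M. X w \<in> A \<and> Yt w = 1} \<in> events"
    by measurable
  have A_Y: "{w \<in> space M. X w \<in> A \<and> Y w = 1} \<in> events"
    by measurable
  have swap: "{w \<in> space M. (X w \<in> A \<and> Yt w = 1) \<and> Y w = y}
      = {w \<in> space M. X w \<in> A \<and> Y w = y \<and> Yt w = 1}" for y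
    by auto
  have "prob {w \<in> space M. X w \<in> A \<and> Yt w = 1}
      = prob {w \<in> space M. (X w \<in> A \<and> Yt w = 1) \<and> Y w = 1}
        + prob {w \<in> space M. (X w \<in> A \<and> Yt w = 1) \<and> Y w = -1}"
    using measure_label_neg[OF A_Yt Y_label Y_measurable, of 1] by (simp add: labels_def)
  then have "prob {w \<in> space M. X w \<in> A \<and> Yt w = 1}
      = prob {w \<in> space M. X w \<in> A \<and> Y w = 1 \<and> Yt w = 1}
        + prob {w \<in> space M. X w \<in> A \<and> Y w = -1 \<and> Yt w = 1}"
    unfolding swap .
  moreover have "prob {w \<in> space M. X w \<in> A \<and> Y w = 1 \<and> Yt w = 1}
      = prob {w \<in> space M. X w \<in> A \<and> Y w = 1}
        - prob {w \<in> space M. X w \<in> A \<and> Y w = 1 \<and> Yt w = -1}"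
    using measure_label_neg[OF A_Y Yt_label Yt_measurable, of "-1"] by (simp add: labels_def conj_assoc)
  ultimately show ?thesis
    using prob_noise_cond_label[OF assms, of 1 "-1"] prob_noise_cond_label[OF assms, of "-1" 1]
    unfolding e_plus_def e_minus_def by (simp add: algebra_simps)
qed

lemma label_cov_noisy:
  assumes [measurable]: "h \<in> N \<rightarrow>\<^sub>M count_space UNIV"
  shows "label_cov M (\<lambda>w. h (X w)) Yt
       = (1 - e_plus M Y Yt - e_minus M Y Yt) * label_cov M (\<lambda>w. h (X w)) Y"
proof -
  define A where "A = {x \<in> space N. h x = 1}"
  have A: "A \<in> sets N"
    unfolding A_def by measurable
  have on_A: "{w \<in> space M. X w \<in> A \<and> P w} = {w \<in> space M. h (X w) = 1 \<and> P w}" for P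
    using measurable_space[OF X_measurable] by (auto simp: A_def)
  have on_space: "{w \<in> space M. X w \<in> space N \<and> P w} = {w \<in> space M. P w}" for P
    using measurable_space[OF X_measurable] by auto
  have hX_Yt: "prob {w \<in> space M. h (X w) = 1 \<and> Yt w = 1}
      = (1 - e_plus M Y Yt) * prob {w \<in> space M. h (X w) = 1 \<and> Y w = 1}
        + e_minus M Y Yt * prob {w \<in> space M. h (X w) = 1 \<and> Y w = -1}"
    using prob_noisy_label_pos[OF A] by (simp only: on_A)
  have Yt: "prob {w \<in> space M. Yt w = 1}
      = (1 - e_plus M Y Yt) * prob {w \<in> space M. Y w = 1} + e_minus M Y Yt * prob {w \<in> space M. Y w = -1}"
    using prob_noisy_label_pos[OF sets.top] by (simp only: on_space)
  have "{w \<in> space M. h (X w) = 1} \<in> events"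
    by measurable
  from measure_label_neg[OF this Y_label Y_measurable, of 1]
  have hX_Y: "prob {w \<in> space M. h (X w) = 1 \<and> Y w = -1}
      = prob {w \<in> space M. h (X w) = 1} - prob {w \<in> space M. h (X w) = 1 \<and> Y w = 1}"
    by (simp add: labels_def)
  have Y: "prob {w \<in> space M. Y w = -1} = 1 - prob {w \<in> space M. Y w = 1}"
    using prob_label_compl[OF Y_label Y_measurable, of 1] by (simp add: labels_def)
  show ?thesis
    unfolding label_cov_def hX_Yt Yt hX_Y Y by (simp add: algebra_simps)
qed

lemma fdiv_f_TV_classifier:
  assumes "classifier N h"
    and [measurable]: "V \<in> M \<rightarrow>\<^sub>M count_space UNIV" and "\<forall>w\<in>space M. V w \<in> labels"
  shows "fdiv f_TV (Pjoint M X V h) (Qprod M X V h) = 2 * \<bar>label_cov M (\<lambda>w. h (X w)) V\<bar>"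
proof -
  have [measurable]: "h \<in> N \<rightarrow>\<^sub>M count_space UNIV"
    using assms(1) by (simp add: classifier_def)
  have "\<forall>w\<in>space M. h (X w) \<in> labels"
    using assms(1) measurable_space[OF X_measurable] by (simp add: classifier_def)
  from fdiv_f_TV_labels[of "\<lambda>w. h (X w)" V, OF _ _ this assms(3)]
  show ?thesis
    unfolding Pjoint_def[abs_def] Qprod_def[abs_def] by simp
qed

lemma H_robust_f_TV:
  assumes "e_plus M Y Yt + e_minus M Y Yt < 1" and "\<forall>h\<in>H. classifier N h"
  shows "H_robust f_TV M X Y Yt H"
  unfolding H_robust_def
proof (rule argmax_on_cmult)
  show "0 < 1 - e_plus M Y Yt - e_minus M Y Yt"
    using assms(1) by simp
  show "\<forall>h\<in>H. fdiv f_TV (Pjoint M X Yt h) (Qprod M X Yt h)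
      = (1 - e_plus M Y Yt - e_minus M Y Yt) * fdiv f_TV (Pjoint M X Y h) (Qprod M X Y h)"
    using assms(1,2)
    by (simp add: fdiv_f_TV_classifier Yt_measurable Yt_label Y_measurable Y_label
        label_cov_noisy classifier_def abs_mult)
qed

end

theorem theorem7:
  fixes M :: "'w measure" and N :: "'x measure"
    and X :: "'w \<Rightarrow> 'x" and Y Yt :: "'w \<Rightarrow> int"
  assumes "prob_space M"
    and "X \<in> measurable M N"
    and "Y \<in> measurable M (count_space UNIV)" and "\<forall>w\<in>space M. Y w \<in> labels"
    and "Yt \<in> measurable M (count_space UNIV)" and "\<forall>w\<in>space M. Yt w \<in> labels"
    and noise: "\<forall>A\<in>sets N. \<forall>y y'.
        measure M {w \<in> space M. X w \<in> A \<and> Y w = y \<and> Yt w = y'} * measure M {w \<in> space M. Y w = y}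
      = measure M {w \<in> space M. X w \<in> A \<and> Y w = y} * measure M {w \<in> space M. Y w = y \<and> Yt w = y'}"
    and "e_plus M Y Yt + e_minus M Y Yt < 1"
  shows "(\<exists>c. \<forall>h g. classifier N h \<and> (\<forall>a\<in>labels. \<forall>b\<in>labels. g a b \<in> {-1/2..1/2})
              \<longrightarrow> Bias_f f_TV M X Y Yt h g = c)
       \<and> (\<forall>H. (\<forall>h\<in>H. classifier N h) \<longrightarrow> H_robust f_TV M X Y Yt H)"
proof -
  interpret label_noise M N X Y Yt
    using assms(1-7) by (simp add: label_noise_def label_noise_axioms_def)
  show ?thesis
    using Bias_f_TV_eq_0[OF assms(2)] H_robust_f_TV[OF assms(8)] by blast
qed

end
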